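(* Let $t\ge 2$, $r\ge 3$ and $k\ge 3$ be fixed integers. Then $\mathrm{ex}_r(n,F_{t,k}^r)=\Theta(n^r)$ if $k>r$, and $\mathrm{ex}_r(n,F_{t,k}^r)=\Theta(n^{r-1})$ if $3\le k\le r$ (as $n\to\infty$).
   Context: $F_{t,k}$ denotes the graph on $(k-1)t+1$ vertices consisting of $t$ copies of the complete graph $K_k$ pairwise sharing exactly one common vertex. For a graph $F$, its $r$-expansion $F^r$ is the $r$-graph obtained from $F$ by adding to each edge of $F$ a set of $r-2$ new vertices, where all $(r-2)|E(F)|$ new vertices are distinct from each other and from $V(F)$; each edge together with its new vertices becomes a hyperedge. $\mathrm{ex}_r(n,\mathcal F)$ denotes the maximum number of hyperedges in an $n$-vertex $r$-graph not containing $\mathcal F$ as a subhypergraph. *)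

theory Defs
  imports Main "HOL-Library.Landau_Symbols"
begin

text \<open>A (hyper)graph is given by its set of edges (each edge a finite vertex set).
  The vertex set of the pattern is the union of its edges (no isolated vertices).\<close>

definition contains_copy :: "'a set set \<Rightarrow> 'b set set \<Rightarrow> bool" where
  "contains_copy H F \<longleftrightarrow> (\<exists>f :: 'b \<Rightarrow> 'a. inj_on f (\<Union>F) \<and> (\<forall>e\<in>F. f ` e \<in> H))"

text \<open>The graph F_{t,k}: t copies of K_k pairwise sharing exactly the common vertex None;
  the i-th copy has vertex set {None} \<union> {Some (i,j) | j < k-1}.\<close>
definition clique_part :: "nat \<Rightarrow> nat \<Rightarrow> (nat \<times> nat) option set" where
  "clique_part k i = insert None {Some (i, j) | j. j < k - 1}"

definition Ftk :: "nat \<Rightarrow> nat \<Rightarrow> (nat \<times> nat) option set set" where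
  "Ftk t k = {e. \<exists>i<t. e \<subseteq> clique_part k i \<and> card e = 2}"

text \<open>The r-expansion of a graph G: each edge e is enlarged by r-2 new vertices
  Inr (e,0), ..., Inr (e,r-3), distinct for distinct edges and from V(G).\<close>
definition expansion :: "nat \<Rightarrow> 'a set set \<Rightarrow> ('a + ('a set \<times> nat)) set set" where
  "expansion r G = {Inl ` e \<union> (\<lambda>j. Inr (e, j)) ` {..<r - 2} | e. e \<in> G}"

definition ex_r :: "nat \<Rightarrow> nat \<Rightarrow> 'b set set \<Rightarrow> nat" where
  "ex_r r n F = Max {card H | H :: nat set set.
      H \<subseteq> {e. e \<subseteq> {..<n} \<and> card e = r} \<and> \<not> contains_copy H F}"

end

(*
  For k > r the complete r-partite r-graph with parts of size n div r contains
  no copy: two of the k pairwise adjacent vertices of a K_k would land in the same part, but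
  they lie in a common edge.  For k <= r all r-sets through one vertex form an intersecting
  family, while F_{t,k}^r has two disjoint edges (t >= 2, k >= 3).

  If H has more than M * C(n, r-1) edges, repeatedly deleting the
  edges through an (r-1)-set that lies in fewer than M edges leaves a nonempty subgraph in
  which every such set of an edge lies in at least M edges.  There, exchanging one vertex at a
  time, any edge can be moved off a forbidden set of fewer than M - r vertices while keeping a
  prescribed part.  This gives first a sunflower of t edges through one vertex that hosts the t
  cliques, and then, edge by edge, hyperedges whose r - 2 new vertices avoid everything used.
*)

theory Submission
  imports Defs "HOL-Library.FuncSet"
begin

section \<open>Hypergraphs of large minimum codegree\<close>

definition uniform :: "nat \<Rightarrow> 'a set set \<Rightarrow> bool" where
  "uniform r H \<longleftrightarrow> (\<forall>e\<in>H. finite e \<and> card e = r)"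

definition codegree_ge :: "nat \<Rightarrow> 'a set set \<Rightarrow> bool" where
  "codegree_ge m H \<longleftrightarrow> (\<forall>f\<in>H. \<forall>y\<in>f. m \<le> card {g\<in>H. f - {y} \<subseteq> g})"

lemma codegree_replace_vertex:
  assumes "uniform r H" "codegree_ge m H" "f \<in> H" "y \<in> f" "finite W" "card W < m"
  obtains z where "z \<notin> W" "z \<notin> f - {y}" "insert z (f - {y}) \<in> H"
proof -
  let ?S = "f - {y}"
  let ?Z = "{z. z \<notin> ?S \<and> insert z ?S \<in> H}"
  have cover: "{g\<in>H. ?S \<subseteq> g} \<subseteq> (\<lambda>z. insert z ?S) ` ?Z"
  proof
    fix g assume g: "g \<in> {g\<in>H. ?S \<subseteq> g}"
    have "finite f" "card f = r" "finite g" "card g = r"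
      using g assms(1,3) unfolding uniform_def by auto
    moreover have "0 < card f" using \<open>finite f\<close> assms(4) card_gt_0_iff by blast
    ultimately have "card (g - ?S) = 1"
      using g assms(4) by (simp add: card_Diff_subset)
    then obtain z where "g - ?S = {z}" by (rule card_1_singletonE)
    then have "g = insert z ?S" "z \<notin> ?S" using g by auto
    then show "g \<in> (\<lambda>z. insert z ?S) ` ?Z" using g by (intro rev_image_eqI[of z]) auto
  qed
  have "\<not> ?Z \<subseteq> W"
  proof
    assume "?Z \<subseteq> W"
    then have "card {g\<in>H. ?S \<subseteq> g} \<le> card ((\<lambda>z. insert z ?S) ` W)"
      using order_trans[OF cover image_mono[OF \<open>?Z \<subseteq> W\<close>]] \<open>finite W\<close>
      by (intro card_mono finite_imageI)
    also have "\<dots> \<le> card W" using \<open>finite W\<close> by (rule card_image_le)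
    finally have "card {g\<in>H. ?S \<subseteq> g} < m" using assms(6) by linarith
    moreover have "m \<le> card {g\<in>H. ?S \<subseteq> g}" using assms(2-4) unfolding codegree_ge_def by blast
    ultimately show False by linarith
  qed
  then show thesis using that by blast
qed

lemma codegree_extend_edge:
  assumes H: "uniform r H" "codegree_ge m H" and U: "finite U" "card U + r < m"
    and "f \<in> H" "K \<subseteq> f"
  shows "\<exists>g\<in>H. K \<subseteq> g \<and> (g - K) \<inter> U = {}"
  using \<open>f \<in> H\<close> \<open>K \<subseteq> f\<close>
proof (induction "card ((f - K) \<inter> U)" arbitrary: f rule: less_induct)
  case less
  show ?case
  proof (cases "(f - K) \<inter> U = {}")
    case True
    then show ?thesis using less.prems by blast
  next
    case False
    then obtain y where y: "y \<in> f" "y \<notin> K" "y \<in> U" by blast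
    have "finite f" "card f = r" using H(1) less.prems(1) unfolding uniform_def by auto
    then have "finite (U \<union> f)" "card (U \<union> f) < m"
      using card_Un_le[of U f] U by auto
    then obtain z where z: "z \<notin> U \<union> f" "insert z (f - {y}) \<in> H"
      using codegree_replace_vertex[OF H less.prems(1) y(1)] by blast
    let ?f = "insert z (f - {y})"
    have eq: "(?f - K) \<inter> U = (f - K) \<inter> U - {y}" using z y by blast
    have smaller: "card ((?f - K) \<inter> U) < card ((f - K) \<inter> U)"
      unfolding eq using y U(1) by (intro card_Diff1_less) auto
    have "K \<subseteq> ?f" using less.prems y by blast
    with smaller z(2) show ?thesis by (rule less.hyps)
  qed
qed

lemma exists_codegree_ge_subgraph:
  assumes "finite D" "\<forall>f\<in>H. \<forall>y\<in>f. f - {y} \<in> D" "m * card D < card H"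
  shows "\<exists>H'\<subseteq>H. H' \<noteq> {} \<and> codegree_ge m H'"
  using assms
proof (induction "card D" arbitrary: H D rule: less_induct)
  case less
  show ?case
  proof (cases "codegree_ge m H")
    case True
    then show ?thesis using less.prems(3) by (intro exI[of _ H]) auto
  next
    case False
    then obtain f y where fy: "f \<in> H" "y \<in> f" and few: "card {g\<in>H. f - {y} \<subseteq> g} < m"
      unfolding codegree_ge_def by (meson not_le)
    \<comment> \<open>Deleting the fewer than m edges through f - {y} removes f - {y} from the possible shadows.\<close>
    let ?H = "{g\<in>H. \<not> f - {y} \<subseteq> g}"
    have "f - {y} \<in> D" using less.prems(2) fy by blast
    then have D: "card D = Suc (card (D - {f - {y}}))"
      by (rule card.remove[OF less.prems(1)])
    then have D': "card (D - {f - {y}}) < card D" by simp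
    have "finite H" using less.prems(3) by (simp add: card_ge_0_finite)
    then have "card (?H \<union> {g\<in>H. f - {y} \<subseteq> g}) = card ?H + card {g\<in>H. f - {y} \<subseteq> g}"
      by (intro card_Un_disjoint) auto
    moreover have "?H \<union> {g\<in>H. f - {y} \<subseteq> g} = H" by blast
    ultimately have "m * card (D - {f - {y}}) < card ?H" using few less.prems(3) D by simp
    moreover have "\<forall>g\<in>?H. \<forall>z\<in>g. g - {z} \<in> D - {f - {y}}" using less.prems(2) by blast
    moreover have "finite (D - {f - {y}})" using less.prems(1) by simp
    ultimately have "\<exists>H'\<subseteq>?H. H' \<noteq> {} \<and> codegree_ge m H'"
      by (intro less.hyps[OF D'])
    then show ?thesis by blast
  qed
qed

lemma codegree_disjoint_extensions:
  assumes H: "uniform r H" "codegree_ge m H"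
    and "finite I" and K: "\<forall>i\<in>I. \<exists>f\<in>H. K i \<subseteq> f"
    and U: "finite U" and m: "card U + card I * r + r < m"
  shows "\<exists>g. \<forall>i\<in>I. g i \<in> H \<and> K i \<subseteq> g i \<and> (g i - K i) \<inter> U = {} \<and>
                 (\<forall>j\<in>I. j \<noteq> i \<longrightarrow> (g i - K i) \<inter> (g j - K j) = {})"
  using \<open>finite I\<close> K m
proof (induction I rule: finite_induct)
  case empty
  then show ?case by simp
next
  case (insert i I)
  then obtain g where g: "\<forall>i\<in>I. g i \<in> H \<and> K i \<subseteq> g i \<and> (g i - K i) \<inter> U = {} \<and>
                 (\<forall>j\<in>I. j \<noteq> i \<longrightarrow> (g i - K i) \<inter> (g j - K j) = {})"
    by auto
  let ?U = "U \<union> (\<Union>j\<in>I. g j)"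
  have "card (\<Union>j\<in>I. g j) \<le> (\<Sum>j\<in>I. card (g j))" using insert.hyps(1) by (rule card_UN_le)
  also have "\<dots> = card I * r" using g H(1) unfolding uniform_def by simp
  finally have small: "card ?U + r < m"
    using card_Un_le[of U "\<Union>j\<in>I. g j"] insert.prems(2) insert.hyps by simp
  have "finite ?U" using U g H(1) insert.hyps(1) unfolding uniform_def by auto
  moreover obtain f where "f \<in> H" "K i \<subseteq> f" using insert.prems(1) by blast
  ultimately obtain g' where g': "g' \<in> H" "K i \<subseteq> g'" "(g' - K i) \<inter> ?U = {}"
    using codegree_extend_edge[OF H _ small] by blast
  show ?case
    using g g' insert.hyps(2) by (intro exI[of _ "g(i := g')"]) auto
qed

lemma inj_on_case_sum:
  assumes "inj_on f A" "inj_on g B" "f ` A \<inter> g ` B = {}"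
  shows "inj_on (case_sum f g) (Inl ` A \<union> Inr ` B)"
proof (rule inj_onI)
  fix u v assume "u \<in> Inl ` A \<union> Inr ` B" "v \<in> Inl ` A \<union> Inr ` B"
    and "case_sum f g u = case_sum f g v"
  then show "u = v" using assms by (elim UnE imageE) (auto dest: inj_onD)
qed

lemma inj_on_case_prod_Sigma:
  assumes "\<forall>i\<in>I. inj_on (b i) (J i)"
    and "\<forall>i\<in>I. \<forall>i'\<in>I. i \<noteq> i' \<longrightarrow> b i ` J i \<inter> b i' ` J i' = {}"
  shows "inj_on (\<lambda>(i, j). b i j) (Sigma I J)"
proof (rule inj_onI, clarify)
  fix i j i' j' assume ij: "i \<in> I" "j \<in> J i" "i' \<in> I" "j' \<in> J i'" "b i j = b i' j'"
  then have "i = i'" using assms(2) by blast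
  with ij show "i = i' \<and> j = j'" using assms(1) by (auto dest: inj_onD)
qed

lemma codegree_contains_expansion:
  assumes H: "uniform r H" "codegree_ge m H"
    and G: "finite G" "\<forall>e\<in>G. card e = 2"
    and c: "inj_on c (\<Union>G)" "\<forall>e\<in>G. \<exists>f\<in>H. c ` e \<subseteq> f"
    and m: "card (\<Union>G) + card G * r + r < m"
  shows "contains_copy H (expansion r G)"
proof -
  have "finite (\<Union>G)" using G(1) by (rule finite_Union) (metis G(2) card.infinite zero_neq_numeral)
  moreover have "card (c ` \<Union>G) \<le> card (\<Union>G)" by (rule card_image_le) fact
  ultimately obtain g where g: "\<forall>e\<in>G. g e \<in> H \<and> c ` e \<subseteq> g e \<and> (g e - c ` e) \<inter> c ` \<Union>G = {} \<and>
      (\<forall>e'\<in>G. e' \<noteq> e \<longrightarrow> (g e - c ` e) \<inter> (g e' - c ` e') = {})"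
    using codegree_disjoint_extensions[OF H G(1) c(2), of "c ` \<Union>G"] m by auto
  have "\<exists>h. bij_betw h {..<r - 2} (g e - c ` e)" if e: "e \<in> G" for e
  proof -
    have "card (c ` e) = 2" using e G(2) c(1) by (metis Union_upper card_image inj_on_subset)
    moreover have "g e \<in> H" "c ` e \<subseteq> g e" using g e by auto
    moreover from this(1) have "finite (g e)" "card (g e) = r" using H(1) unfolding uniform_def by auto
    ultimately have "card (g e - c ` e) = r - 2" "finite (g e - c ` e)"
      by (metis card_Diff_subset finite_subset, simp)
    then show ?thesis by (metis atLeast0LessThan ex_bij_betw_nat_finite)
  qed
  then have "\<forall>e\<in>G. \<exists>h. bij_betw h {..<r - 2} (g e - c ` e)" by blast
  from bchoice[OF this] obtain b where b: "\<forall>e\<in>G. bij_betw (b e) {..<r - 2} (g e - c ` e)"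
    by blast
  define \<phi> where "\<phi> = case_sum c (\<lambda>(e, j). b e j)"
  have new: "(\<lambda>(e, j). b e j) ` Sigma G (\<lambda>_. {..<r - 2}) \<subseteq> (\<Union>e\<in>G. g e - c ` e)"
    using b unfolding bij_betw_def by auto
  have "inj_on \<phi> (Inl ` \<Union>G \<union> Inr ` Sigma G (\<lambda>_. {..<r - 2}))"
    unfolding \<phi>_def
  proof (rule inj_on_case_sum)
    show "inj_on (\<lambda>(e, j). b e j) (Sigma G (\<lambda>_. {..<r - 2}))"
      using b g by (intro inj_on_case_prod_Sigma) (auto simp: bij_betw_def)
    show "c ` \<Union>G \<inter> (\<lambda>(e, j). b e j) ` Sigma G (\<lambda>_. {..<r - 2}) = {}"
      using new g by blast
  qed fact
  moreover have "\<Union>(expansion r G) \<subseteq> Inl ` \<Union>G \<union> Inr ` Sigma G (\<lambda>_. {..<r - 2})"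
    unfolding expansion_def by blast
  ultimately have "inj_on \<phi> (\<Union>(expansion r G))" by (rule inj_on_subset)
  moreover have "\<phi> ` X \<in> H" if X: "X \<in> expansion r G" for X
  proof -
    obtain e where e: "e \<in> G" "X = Inl ` e \<union> (\<lambda>j. Inr (e, j)) ` {..<r - 2}"
      using X unfolding expansion_def by blast
    then have "\<phi> ` X = c ` e \<union> b e ` {..<r - 2}"
      unfolding \<phi>_def by (auto simp: image_Un image_image)
    also have "\<dots> = c ` e \<union> (g e - c ` e)" using b e(1) unfolding bij_betw_def by simp
    also have "\<dots> = g e" using g e(1) by blast
    finally show ?thesis using g e(1) by simp
  qed
  ultimately show ?thesis unfolding contains_copy_def by blast
qed

section \<open>Embedding the expansion of F_{t,k}\<close>

lemma card_clique_part: "1 \<le> k \<Longrightarrow> card (clique_part k i) = k"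
proof -
  assume "1 \<le> k"
  have "clique_part k i = insert None (Some ` Pair i ` {..<k - 1})"
    unfolding clique_part_def by auto
  moreover have "card (Some ` Pair i ` {..<k - 1}) = k - 1"
    by (simp add: card_image inj_on_def)
  ultimately show ?thesis using \<open>1 \<le> k\<close> by simp
qed

lemma Union_Ftk_subset: "\<Union>(Ftk t k) \<subseteq> (\<Union>i<t. clique_part k i)"
  unfolding Ftk_def by blast

lemma finite_Ftk: "finite (Ftk t k)"
proof -
  have "Ftk t k \<subseteq> Pow (\<Union>i<t. clique_part k i)" unfolding Ftk_def by blast
  moreover have "finite (clique_part k i)" for i unfolding clique_part_def by simp
  ultimately show ?thesis by (meson finite_Pow_iff finite_UN_I finite_lessThan finite_subset)
qed

lemma card_Union_Ftk_le: "card (\<Union>(Ftk t k)) \<le> t * k"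
proof (cases "k = 0")
  case False
  have "finite (clique_part k i)" for i unfolding clique_part_def by simp
  then have "card (\<Union>(Ftk t k)) \<le> card (\<Union>i<t. clique_part k i)"
    by (intro card_mono Union_Ftk_subset) auto
  also have "\<dots> \<le> (\<Sum>i<t. card (clique_part k i))" by (rule card_UN_le) simp
  also have "\<dots> = t * k" using False by (simp add: card_clique_part)
  finally show ?thesis .
next
  case True
  then have "Ftk t k = {}" unfolding Ftk_def clique_part_def by (auto simp: subset_singleton_iff)
  then show ?thesis by simp
qed

lemma doubleton_in_Ftk:
  "i < t \<Longrightarrow> u \<in> clique_part k i \<Longrightarrow> v \<in> clique_part k i \<Longrightarrow> u \<noteq> v \<Longrightarrow> {u, v} \<in> Ftk t k"
  unfolding Ftk_def by auto

lemma expansion_Ftk_nonempty: "1 \<le> t \<Longrightarrow> 2 \<le> k \<Longrightarrow> expansion r (Ftk t k) \<noteq> {}"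
  using doubleton_in_Ftk[of 0 t None k "Some (0, 0)"] unfolding clique_part_def expansion_def by auto

lemma clique_parts_into_petals:
  assumes E: "\<forall>i<t. x \<in> E i \<and> finite (E i) \<and> k \<le> card (E i)"
    and petals: "\<forall>i<t. \<forall>j<t. i \<noteq> j \<longrightarrow> (E i - {x}) \<inter> (E j - {x}) = {}"
  obtains c where "inj_on c (\<Union>i<t. clique_part k i)" "\<forall>i<t. c ` clique_part k i \<subseteq> E i"
proof -
  have "\<exists>h. inj_on h {..<k - 1} \<and> h ` {..<k - 1} \<subseteq> E i - {x}" if "i < t" for i
  proof -
    have "card {..<k - 1} \<le> card (E i - {x})" using E that by auto
    then show ?thesis using E that by (metis card_le_inj finite_Diff finite_lessThan)
  qed
  then obtain a where a: "\<forall>i<t. inj_on (a i) {..<k - 1} \<and> a i ` {..<k - 1} \<subseteq> E i - {x}"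
    by metis
  define c where "c = case_option x (\<lambda>(i, j). a i j)"
  define S where "S = Sigma {..<t} (\<lambda>_. {..<k - 1})"
  have "inj_on (\<lambda>(i, j). a i j) S"
    unfolding S_def using a petals by (intro inj_on_case_prod_Sigma) blast+
  then have "inj_on c (Some ` S)" by (intro inj_on_imageI) (simp add: c_def comp_def)
  moreover have "x \<notin> c ` Some ` S" using a unfolding c_def S_def by fastforce
  ultimately have "inj_on c (insert None (Some ` S))" by (simp add: c_def)
  moreover have "(\<Union>i<t. clique_part k i) \<subseteq> insert None (Some ` S)"
    unfolding clique_part_def S_def by auto
  ultimately have "inj_on c (\<Union>i<t. clique_part k i)" by (rule inj_on_subset)
  moreover have "\<forall>i<t. c ` clique_part k i \<subseteq> E i"
    using a E unfolding c_def clique_part_def by fastforce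
  ultimately show thesis by (rule that)
qed

lemma codegree_contains_expansion_Ftk:
  assumes H: "uniform r H" "codegree_ge m H" "H \<noteq> {}"
    and k: "1 \<le> k" "k \<le> r" and m: "(t + card (Ftk t k)) * r + r < m"
  shows "contains_copy H (expansion r (Ftk t k))"
proof -
  obtain f where "f \<in> H" using H(3) by blast
  moreover have "card f = r" "finite f" using \<open>f \<in> H\<close> H(1) unfolding uniform_def by auto
  ultimately obtain x where "x \<in> f" using k by (metis card.empty all_not_in_conv not_one_le_zero order_trans)
  \<comment> \<open>A sunflower of t edges with kernel {x}, one petal for each clique.\<close>
  have "\<exists>E. \<forall>i\<in>{..<t}. E i \<in> H \<and> {x} \<subseteq> E i \<and> (E i - {x}) \<inter> {} = {} \<and>
      (\<forall>j\<in>{..<t}. j \<noteq> i \<longrightarrow> (E i - {x}) \<inter> (E j - {x}) = {})"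
    using \<open>f \<in> H\<close> \<open>x \<in> f\<close> m by (intro codegree_disjoint_extensions[OF H(1,2)]) (auto simp: algebra_simps)
  then obtain E where E: "\<forall>i<t. E i \<in> H \<and> x \<in> E i"
    and petals: "\<forall>i<t. \<forall>j<t. i \<noteq> j \<longrightarrow> (E i - {x}) \<inter> (E j - {x}) = {}"
    by auto
  have "\<forall>i<t. x \<in> E i \<and> finite (E i) \<and> k \<le> card (E i)" using E H(1) k unfolding uniform_def by auto
  then obtain c where c: "inj_on c (\<Union>i<t. clique_part k i)" "\<forall>i<t. c ` clique_part k i \<subseteq> E i"
    using petals by (rule clique_parts_into_petals)
  show ?thesis
  proof (rule codegree_contains_expansion[OF H(1,2) finite_Ftk])
    show "\<forall>e\<in>Ftk t k. card e = 2" unfolding Ftk_def by blast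
    show "inj_on c (\<Union>(Ftk t k))" using c(1) Union_Ftk_subset by (rule inj_on_subset)
    show "\<forall>e\<in>Ftk t k. \<exists>f\<in>H. c ` e \<subseteq> f" using c(2) E unfolding Ftk_def by blast
    have "card (\<Union>(Ftk t k)) \<le> t * r" using card_Union_Ftk_le[of t k] k(2) by (meson le_trans mult_le_mono2)
    then show "card (\<Union>(Ftk t k)) + card (Ftk t k) * r + r < m" using m by (simp add: algebra_simps)
  qed
qed

section \<open>Upper bounds on the extremal number\<close>

lemma contains_copy_mono: "contains_copy H F \<Longrightarrow> H \<subseteq> H' \<Longrightarrow> contains_copy H' F"
  unfolding contains_copy_def by blast

lemma finite_ex_r_candidates:
  "finite {card H | H :: nat set set. H \<subseteq> {e. e \<subseteq> {..<n} \<and> card e = r} \<and> \<not> contains_copy H F}"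
proof -
  have "{card H | H :: nat set set. H \<subseteq> {e. e \<subseteq> {..<n} \<and> card e = r} \<and> \<not> contains_copy H F}
     \<subseteq> card ` Pow (Pow {..<n})" by blast
  then show ?thesis by (rule finite_subset) simp
qed

lemma ex_r_ge:
  assumes "H \<subseteq> {e. e \<subseteq> {..<n} \<and> card e = r}" "\<not> contains_copy H F"
  shows "card H \<le> ex_r r n F"
  unfolding ex_r_def using assms by (intro Max_ge[OF finite_ex_r_candidates]) blast

(* Without F \<noteq> {} every r-graph contains F, and ex_r is the junk value Max {}. *)
lemma ex_r_le:
  assumes "\<And>H. H \<subseteq> {e. e \<subseteq> {..<n} \<and> card e = r} \<Longrightarrow> \<not> contains_copy H F \<Longrightarrow> card H \<le> B"
    and "F \<noteq> {}"
  shows "ex_r r n F \<le> B"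
  unfolding ex_r_def
proof (rule Max.boundedI[OF finite_ex_r_candidates])
  have "\<not> contains_copy {} F" using assms(2) unfolding contains_copy_def by blast
  then show "{card H | H :: nat set set. H \<subseteq> {e. e \<subseteq> {..<n} \<and> card e = r} \<and> \<not> contains_copy H F} \<noteq> {}"
    by blast
qed (use assms(1) in blast)

lemma card_subsets_lessThan: "card {e. e \<subseteq> {..<n::nat} \<and> card e = r} = n choose r"
  using n_subsets[of "{..<n}" r] by simp

lemma binomial_le_power: "n choose r \<le> n ^ r"
  by (cases "r \<le> n") (auto simp: binomial_le_pow binomial_eq_0)

lemma ex_r_le_power:
  assumes "F \<noteq> {}"
  shows "ex_r r n F \<le> n ^ r"
proof (rule ex_r_le[OF _ assms])
  fix H assume "H \<subseteq> {e. e \<subseteq> {..<n} \<and> card e = r}"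
  then have "card H \<le> card {e. e \<subseteq> {..<n} \<and> card e = r}" by (intro card_mono) simp_all
  then show "card H \<le> n ^ r" using binomial_le_power[of n r] by (simp add: card_subsets_lessThan)
qed

lemma ex_r_expansion_Ftk_le:
  assumes "1 \<le> t" "2 \<le> k" "k \<le> r"
  shows "ex_r r n (expansion r (Ftk t k)) \<le> ((t + card (Ftk t k)) * r + r + 1) * n ^ (r - 1)"
proof -
  define M where "M = (t + card (Ftk t k)) * r + r + 1"
  define D where "D = {S. S \<subseteq> {..<n} \<and> card S = r - 1}"
  have "ex_r r n (expansion r (Ftk t k)) \<le> M * card D"
  proof (rule ex_r_le)
    fix H assume H: "H \<subseteq> {e. e \<subseteq> {..<n} \<and> card e = r}"
      and free: "\<not> contains_copy H (expansion r (Ftk t k))"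
    have uniform: "uniform r H"
      using H finite_subset[OF _ finite_lessThan] unfolding uniform_def by blast
    have shadow: "\<forall>f\<in>H. \<forall>y\<in>f. f - {y} \<in> D"
    proof (intro ballI)
      fix f y assume "f \<in> H" "y \<in> f"
      moreover from this(1) have "finite f" using uniform unfolding uniform_def by blast
      ultimately show "f - {y} \<in> D" using H unfolding D_def by (auto simp: card_Diff_singleton)
    qed
    show "card H \<le> M * card D"
    proof (rule ccontr)
      assume "\<not> card H \<le> M * card D"
      then have many: "M * card D < card H" by simp
      have "finite D" unfolding D_def by simp
      then obtain H' where H': "H' \<subseteq> H" "H' \<noteq> {}" "codegree_ge M H'"
        using exists_codegree_ge_subgraph[OF _ shadow many] by blast
      have "uniform r H'" using uniform H'(1) unfolding uniform_def by blast
      moreover have "(t + card (Ftk t k)) * r + r < M" unfolding M_def by simp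
      ultimately have "contains_copy H' (expansion r (Ftk t k))"
        using H'(2,3) assms(2,3) by (intro codegree_contains_expansion_Ftk) simp_all
      then show False using free contains_copy_mono H'(1) by blast
    qed
  next
    show "expansion r (Ftk t k) \<noteq> {}" using assms by (intro expansion_Ftk_nonempty) simp_all
  qed
  also have "\<dots> \<le> M * n ^ (r - 1)"
    unfolding D_def card_subsets_lessThan using binomial_le_power by simp
  finally show ?thesis unfolding M_def .
qed

section \<open>Constructions without a copy\<close>

lemma rainbow_not_contains_expansion:
  assumes rainbow: "\<forall>e\<in>H. inj_on p e \<and> p ` e \<subseteq> {..<r}"
    and clique: "\<forall>u\<in>C. \<forall>v\<in>C. u \<noteq> v \<longrightarrow> {u, v} \<in> G"
    and C: "finite C" "r < card C" "1 \<le> r"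
  shows "\<not> contains_copy H (expansion s G)"
proof
  assume "contains_copy H (expansion s G)"
  then obtain \<phi> where inj: "inj_on \<phi> (\<Union>(expansion s G))" and edges: "\<forall>X\<in>expansion s G. \<phi> ` X \<in> H"
    unfolding contains_copy_def by blast
  let ?col = "\<lambda>u. p (\<phi> (Inl u))"
  have pair: "?col u \<noteq> ?col v \<and> ?col u < r" if uv: "u \<in> C" "v \<in> C" "u \<noteq> v" for u v
  proof -
    define X where "X = Inl ` {u, v} \<union> (\<lambda>j. Inr ({u, v}, j)) ` {..<s - 2}"
    have X: "X \<in> expansion s G" using clique uv unfolding X_def expansion_def by blast
    have uvX: "Inl u \<in> X" "Inl v \<in> X" unfolding X_def by auto
    have "Inl u \<noteq> Inl v" using uv(3) by simp
    then have ne: "\<phi> (Inl u) \<noteq> \<phi> (Inl v)"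
      using inj_on_contraD[OF inj _ UnionI[OF X uvX(1)] UnionI[OF X uvX(2)]] by simp
    have rb: "inj_on p (\<phi> ` X)" "p ` \<phi> ` X \<subseteq> {..<r}" using rainbow edges X by auto
    have "\<phi> (Inl u) \<in> \<phi> ` X" "\<phi> (Inl v) \<in> \<phi> ` X" using uvX by auto
    then show ?thesis using inj_on_contraD[OF rb(1) ne] rb(2) by blast
  qed
  have "inj_on ?col C"
  proof (rule inj_onI)
    fix u v assume "u \<in> C" "v \<in> C" "?col u = ?col v"
    then show "u = v" using pair[of u v] by blast
  qed
  moreover have "?col ` C \<subseteq> {..<r}"
  proof
    fix w assume "w \<in> ?col ` C"
    then obtain u where u: "u \<in> C" "w = ?col u" by blast
    have "card (C - {u}) \<noteq> 0" using C u(1) by (simp add: card_Diff_singleton)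
    then have "C - {u} \<noteq> {}" by (metis card.empty)
    then obtain v where "v \<in> C" "v \<noteq> u" by blast
    then show "w \<in> {..<r}" using pair u by simp
  qed
  ultimately have "card C \<le> r"
    using card_mono[of "{..<r}" "?col ` C"] card_image[of ?col C] by simp
  then show False using C(2) by simp
qed

lemma partite_rgraph_exists:
  fixes q r n :: nat
  assumes "q * r \<le> n"
  obtains H where "H \<subseteq> {e. e \<subseteq> {..<n} \<and> card e = r}" "card H = q ^ r"
    "\<forall>e\<in>H. inj_on (\<lambda>x. x div q) e \<and> (\<lambda>x. x div q) ` e \<subseteq> {..<r}"
proof -
  \<comment> \<open>Part j is {j * q..<(j + 1) * q}; g picks the vertex j * q + g j in each part.\<close>
  define emb where "emb g = (\<lambda>j. j * q + g j) ` {..<r}" for g :: "nat \<Rightarrow> nat"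
  define P where "P = {..<r} \<rightarrow>\<^sub>E {..<q}"
  have div: "(j * q + a) div q = j" if "a < q" for j a using that by simp
  have emb: "inj_on (\<lambda>j. j * q + g j) {..<r}" "inj_on (\<lambda>x. x div q) (emb g)"
    "(\<lambda>x. x div q) ` emb g \<subseteq> {..<r}" "emb g \<subseteq> {..<n}" if "g \<in> P" for g
  proof -
    have g: "g j < q" if "j < r" for j using \<open>g \<in> P\<close> that unfolding P_def by auto
    show "inj_on (\<lambda>j. j * q + g j) {..<r}" by (rule inj_on_inverseI[where g = "\<lambda>x. x div q"]) (simp add: g div)
    show "inj_on (\<lambda>x. x div q) (emb g)" unfolding emb_def
      by (rule inj_on_inverseI[where g = "\<lambda>j. j * q + g j"]) (auto simp: g div)
    show "(\<lambda>x. x div q) ` emb g \<subseteq> {..<r}" unfolding emb_def by (auto simp: g div)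
    have "j * q + g j < n" if "j < r" for j
    proof -
      have "j * q + g j < (j + 1) * q" using g[OF that] by simp
      also have "\<dots> \<le> r * q" using that by (intro mult_le_mono1) simp
      finally show ?thesis using assms by (simp add: mult.commute)
    qed
    then show "emb g \<subseteq> {..<n}" unfolding emb_def by blast
  qed
  have "inj_on emb P"
  proof (rule inj_onI)
    fix g g' assume gg: "g \<in> P" "g' \<in> P" "emb g = emb g'"
    show "g = g'"
    proof (rule PiE_ext[OF gg(1)[unfolded P_def] gg(2)[unfolded P_def]])
      fix i assume i: "i \<in> {..<r}"
      then have "i * q + g i \<in> emb g'" using gg(3) unfolding emb_def by blast
      then obtain j where j: "j < r" "i * q + g i = j * q + g' j" unfolding emb_def by blast
      have "g i < q" "g' j < q" using gg i j unfolding P_def by auto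
      then have "i = j" using j div by metis
      then show "g i = g' i" using j by simp
    qed
  qed
  then have "card (emb ` P) = q ^ r" unfolding P_def by (simp add: card_image card_PiE)
  moreover have "emb ` P \<subseteq> {e. e \<subseteq> {..<n} \<and> card e = r}"
  proof clarify
    fix g assume "g \<in> P"
    then show "emb g \<subseteq> {..<n} \<and> card (emb g) = r"
      using emb unfolding emb_def by (simp add: card_image)
  qed
  ultimately show thesis using emb by (intro that[of "emb ` P"]) auto
qed

lemma ex_r_expansion_Ftk_ge_partite:
  assumes "1 \<le> t" "1 \<le> r" "r < k"
  shows "(n div r) ^ r \<le> ex_r r n (expansion r (Ftk t k))"
proof -
  obtain H where sub: "H \<subseteq> {e. e \<subseteq> {..<n} \<and> card e = r}" and H: "card H = (n div r) ^ r"
    "\<forall>e\<in>H. inj_on (\<lambda>x. x div (n div r)) e \<and> (\<lambda>x. x div (n div r)) ` e \<subseteq> {..<r}"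
    using div_times_less_eq_dividend by (rule partite_rgraph_exists)
  have "\<not> contains_copy H (expansion r (Ftk t k))"
  proof (rule rainbow_not_contains_expansion[OF H(2)])
    show "\<forall>u\<in>clique_part k 0. \<forall>v\<in>clique_part k 0. u \<noteq> v \<longrightarrow> {u, v} \<in> Ftk t k"
      using assms(1) by (intro ballI impI doubleton_in_Ftk) simp_all
    show "finite (clique_part k 0)" unfolding clique_part_def by simp
    show "r < card (clique_part k 0)" using assms by (simp add: card_clique_part)
  qed fact
  then show ?thesis using ex_r_ge[OF sub] H(1) by simp
qed

lemma intersecting_not_contains_expansion:
  fixes G :: "'b set set"
  assumes "\<forall>e\<in>H. \<forall>f\<in>H. e \<inter> f \<noteq> {}" "a \<in> G" "b \<in> G" "a \<noteq> b" "a \<inter> b = {}"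
  shows "\<not> contains_copy H (expansion r G)"
proof
  assume "contains_copy H (expansion r G)"
  then obtain \<phi> where inj: "inj_on \<phi> (\<Union>(expansion r G))" and edges: "\<forall>X\<in>expansion r G. \<phi> ` X \<in> H"
    unfolding contains_copy_def by blast
  define X where "X e = Inl ` e \<union> (\<lambda>j. Inr (e, j)) ` {..<r - 2}" for e :: "'b set"
  have X: "X a \<in> expansion r G" "X b \<in> expansion r G"
    using assms(2,3) unfolding X_def expansion_def by blast+
  have "X a \<inter> X b = {}" using assms(4,5) unfolding X_def by auto
  then have "\<phi> ` X a \<inter> \<phi> ` X b = {}"
    using inj_on_image_Int[OF inj, of "X a" "X b"] X by auto
  then show False using assms(1) edges X by blast
qed

lemma ex_r_expansion_Ftk_ge_star:
  assumes "2 \<le> t" "3 \<le> k" "1 \<le> r" "1 \<le> n"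
  shows "(n - 1) choose (r - 1) \<le> ex_r r n (expansion r (Ftk t k))"
proof -
  define T where "T = {S. S \<subseteq> {1..<n} \<and> card S = r - 1}"
  define H where "H = insert 0 ` T"
  have "inj_on (insert 0) T"
    by (rule inj_on_inverseI[where g = "\<lambda>E. E - {0}"]) (auto simp: T_def)
  then have "card H = (n - 1) choose (r - 1)"
    unfolding H_def T_def using n_subsets[of "{1..<n}" "r - 1"] by (simp add: card_image)
  moreover have "H \<subseteq> {e. e \<subseteq> {..<n} \<and> card e = r}"
  proof
    fix e assume "e \<in> H"
    then obtain S where S: "S \<subseteq> {1..<n}" "card S = r - 1" "e = insert 0 S" unfolding H_def T_def by blast
    then have "finite S" "0 \<notin> S" using finite_subset by auto
    then show "e \<in> {e. e \<subseteq> {..<n} \<and> card e = r}" using S assms(3,4) by auto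
  qed
  moreover have "\<not> contains_copy H (expansion r (Ftk t k))"
  proof (rule intersecting_not_contains_expansion[where a = "{Some (0, 0), Some (0, 1)}"
        and b = "{Some (1, 0), Some (1, 1)}"])
    show "\<forall>e\<in>H. \<forall>f\<in>H. e \<inter> f \<noteq> {}" unfolding H_def by blast
    show "{Some (0, 0), Some (0, 1)} \<in> Ftk t k"
      using assms(1,2) by (intro doubleton_in_Ftk) (auto simp: clique_part_def)
    show "{Some (1, 0), Some (1, 1)} \<in> Ftk t k"
      using assms(1,2) by (intro doubleton_in_Ftk) (auto simp: clique_part_def)
  qed (simp_all add: doubleton_eq_iff)
  ultimately show ?thesis using ex_r_ge by metis
qed

section \<open>Asymptotics\<close>

lemma bigtheta_power_of_bounds:
  fixes f :: "nat \<Rightarrow> real"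
  assumes "0 < c" "0 < C"
    and "\<And>n. N \<le> n \<Longrightarrow> c * real n ^ p \<le> f n" "\<And>n. N \<le> n \<Longrightarrow> f n \<le> C * real n ^ p"
  shows "f \<in> \<Theta>(\<lambda>n. real n ^ p)"
proof (rule bigthetaI'[OF assms(1,2)])
  have "c * norm (real n ^ p) \<le> norm (f n) \<and> norm (f n) \<le> C * norm (real n ^ p)" if "N \<le> n" for n
  proof -
    have "0 \<le> c * real n ^ p" using assms(1) by simp
    then show ?thesis using assms(3,4)[OF that] by simp
  qed
  then show "eventually (\<lambda>n. c * norm (real n ^ p) \<le> norm (f n) \<and> norm (f n) \<le> C * norm (real n ^ p)) at_top"
    by (rule eventually_at_top_linorderI)
qed

lemma half_real_quotient_le_div:
  assumes "1 \<le> r" "r \<le> n"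
  shows "real n / (2 * real r) \<le> real (n div r)"
proof -
  have "n < n div r * r + r" using assms(1) div_mult_mod_eq[of n r] mod_less_divisor[of r n] by linarith
  also have "\<dots> \<le> (2 * (n div r)) * r"
    using div_greater_zero_iff[of n r] assms by simp
  finally have "real n \<le> 2 * real (n div r) * real r" by (metis less_imp_le of_nat_le_iff of_nat_mult of_nat_numeral)
  then show ?thesis using assms(1) by (simp add: field_simps)
qed

lemma binomial_pred_lower_bound:
  assumes "2 \<le> r" "r \<le> n"
  shows "(1 / (2 * real (r - 1))) ^ (r - 1) * real n ^ (r - 1) \<le> real ((n - 1) choose (r - 1))"
proof -
  have "real n / 2 \<le> real (n - 1)" using assms by (simp add: of_nat_diff)
  then have "real n / 2 / real (r - 1) \<le> real (n - 1) / real (r - 1)" by (rule divide_right_mono) simp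
  then have "real n / (2 * real (r - 1)) \<le> real (n - 1) / real (r - 1)" by (simp add: divide_divide_eq_left)
  then have "(1 / (2 * real (r - 1))) ^ (r - 1) * real n ^ (r - 1) \<le> (real (n - 1) / real (r - 1)) ^ (r - 1)"
    by (simp add: power_mult_distrib[symmetric] power_mono)
  also have "\<dots> \<le> real ((n - 1) choose (r - 1))"
    using assms by (intro binomial_ge_n_over_k_pow_k) simp
  finally show ?thesis .
qed

lemma ex_r_expansion_Ftk_bigtheta_dense:
  assumes "1 \<le> t" "1 \<le> r" "r < k"
  shows "(\<lambda>n. real (ex_r r n (expansion r (Ftk t k)))) \<in> \<Theta>(\<lambda>n. real n ^ r)"
proof (rule bigtheta_power_of_bounds[where N = r])
  fix n assume "r \<le> n"
  have "(1 / (2 * real r)) ^ r * real n ^ r = (real n / (2 * real r)) ^ r"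
    by (simp add: power_mult_distrib[symmetric])
  also have "\<dots> \<le> real (n div r) ^ r"
    using half_real_quotient_le_div[OF assms(2) \<open>r \<le> n\<close>] by (intro power_mono) auto
  also have "\<dots> \<le> real (ex_r r n (expansion r (Ftk t k)))"
    using ex_r_expansion_Ftk_ge_partite[OF assms, of n] by (simp flip: of_nat_power)
  finally show "(1 / (2 * real r)) ^ r * real n ^ r \<le> real (ex_r r n (expansion r (Ftk t k)))" .
next
  fix n
  have "expansion r (Ftk t k) \<noteq> {}" using assms by (intro expansion_Ftk_nonempty) simp_all
  then show "real (ex_r r n (expansion r (Ftk t k))) \<le> 1 * real n ^ r"
    using ex_r_le_power by (simp flip: of_nat_power)
qed (use assms in simp_all)

lemma ex_r_expansion_Ftk_bigtheta_sparse:
  assumes "2 \<le> t" "3 \<le> k" "k \<le> r"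
  shows "(\<lambda>n. real (ex_r r n (expansion r (Ftk t k)))) \<in> \<Theta>(\<lambda>n. real n ^ (r - 1))"
proof (rule bigtheta_power_of_bounds[where N = r])
  fix n assume "r \<le> n"
  then have "(1 / (2 * real (r - 1))) ^ (r - 1) * real n ^ (r - 1) \<le> real ((n - 1) choose (r - 1))"
    using assms by (intro binomial_pred_lower_bound) simp_all
  also have "\<dots> \<le> real (ex_r r n (expansion r (Ftk t k)))"
    using ex_r_expansion_Ftk_ge_star[of t k r n] assms \<open>r \<le> n\<close> by simp
  finally show "(1 / (2 * real (r - 1))) ^ (r - 1) * real n ^ (r - 1) \<le> real (ex_r r n (expansion r (Ftk t k)))" .
next
  fix n
  have "real (ex_r r n (expansion r (Ftk t k))) \<le> real (((t + card (Ftk t k)) * r + r + 1) * n ^ (r - 1))"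
    using assms by (intro of_nat_mono ex_r_expansion_Ftk_le) simp_all
  then show "real (ex_r r n (expansion r (Ftk t k))) \<le> real ((t + card (Ftk t k)) * r + r + 1) * real n ^ (r - 1)"
    by (simp only: of_nat_mult of_nat_power)
qed (use assms in \<open>simp_all add: add_pos_nonneg\<close>)

theorem proposition2:
  fixes t r k :: nat
  assumes "t \<ge> 2" and "r \<ge> 3" and "k \<ge> 3"
  shows "(k > r \<longrightarrow>
            (\<lambda>n. real (ex_r r n (expansion r (Ftk t k)))) \<in> \<Theta>(\<lambda>n. real n ^ r))
       \<and> (k \<le> r \<longrightarrow>
            (\<lambda>n. real (ex_r r n (expansion r (Ftk t k)))) \<in> \<Theta>(\<lambda>n. real n ^ (r - 1)))"
  using assms ex_r_expansion_Ftk_bigtheta_dense[of t r k] ex_r_expansion_Ftk_bigtheta_sparse[of t k r]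
  by simp

end
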